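(* With $h$ as defined in the context, $h$ is smooth (infinitely differentiable) on $(-2,\infty)$.
   Context: Let $u_n=(-1)^{s_2(n)}$, where $s_2(n)$ is the sum of the binary digits of the non-negative integer $n$ (Thue–Morse sequence with values $\pm1$). For real $x>-2$ define $h(x)=\prod_{n=1}^\infty\left(\frac{2n+x}{2n+1+x}\right)^{u_n}$ (limit of partial products; it converges and is positive). *)

theory Defs
  imports "HOL-Analysis.Analysis"
begin

fun bin_digit_sum :: "nat \<Rightarrow> nat" where
  "bin_digit_sum n = (if n = 0 then 0 else n mod 2 + bin_digit_sum (n div 2))"

definition thue_morse :: "nat \<Rightarrow> int" where
  "thue_morse n = (-1) ^ bin_digit_sum n"

definition h_tm :: "real \<Rightarrow> real" where
  "h_tm x = lim (\<lambda>N. \<Prod>n=1..N. ((2 * real n + x) / (2 * real n + 1 + x)) powi thue_morse n)"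

definition smooth_on_real :: "real set \<Rightarrow> (real \<Rightarrow> real) \<Rightarrow> bool" where
  "smooth_on_real S f \<longleftrightarrow>
     (\<exists>F :: nat \<Rightarrow> real \<Rightarrow> real. F 0 = f \<and>
        (\<forall>k. \<forall>x\<in>S. (F k has_real_derivative F (Suc k) x) (at x)))"

end

theory Submission
  imports Defs "HOL-Complex_Analysis.Complex_Analysis" "HOL-Real_Asymp.Real_Asymp"
begin

(* Since u(2m) = u(m) and u(2m+1) = -u(m), the factors n = 2m and n = 2m+1 combine into
   R_m(x)^u(m) with R_m(z) = (4m+z)(4m+3+z) / ((4m+1+z)(4m+2+z)), and R_m(z)^(+-1) - 1 = O(1/m^2)
   uniformly on the half-plane Re z > -2.  So the paired product converges locally uniformly there
   to a holomorphic function G, and h(x) = (3+x)/(2+x) G(x) is the restriction of a holomorphic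
   function to the real axis, hence smooth. *)

declare bin_digit_sum.simps [simp del]

lemma bin_digit_sum_0 [simp]: "bin_digit_sum 0 = 0"
  by (subst bin_digit_sum.simps) simp

lemma bin_digit_sum_double [simp]: "bin_digit_sum (2 * m) = bin_digit_sum m"
  by (subst bin_digit_sum.simps) auto

lemma bin_digit_sum_Suc_double [simp]: "bin_digit_sum (Suc (2 * m)) = Suc (bin_digit_sum m)"
  by (subst bin_digit_sum.simps) simp

lemma thue_morse_double [simp]: "thue_morse (2 * m) = thue_morse m"
  by (simp add: thue_morse_def)

lemma thue_morse_Suc_double [simp]: "thue_morse (Suc (2 * m)) = - thue_morse m"
  by (simp add: thue_morse_def)

lemma thue_morse_1 [simp]: "thue_morse 1 = -1"
  using thue_morse_Suc_double[of 0] by (simp add: thue_morse_def)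

lemma thue_morse_cases: "thue_morse n = 1 \<or> thue_morse n = -1"
  by (simp add: thue_morse_def minus_one_power_iff)

lemma power_int_thue_morse:
  fixes z :: "'a :: division_ring"
  shows "z powi thue_morse n = (if thue_morse n = 1 then z else inverse z)"
  using thue_morse_cases[of n] by (auto simp: power_int_minus)

lemma LIMSEQ_even_odd:
  fixes X :: "nat \<Rightarrow> 'a :: topological_space"
  assumes "(\<lambda>n. X (2 * n)) \<longlonglongrightarrow> L" and "(\<lambda>n. X (2 * n + 1)) \<longlonglongrightarrow> L"
  shows "X \<longlonglongrightarrow> L"
proof (rule topological_tendstoI)
  fix S assume "open S" "L \<in> S"
  with assms obtain N where N: "\<And>n. n \<ge> N \<Longrightarrow> X (2 * n) \<in> S \<and> X (2 * n + 1) \<in> S"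
    unfolding tendsto_def eventually_sequentially by (metis (no_types, lifting) max.boundedE)
  have "X n \<in> S" if "n \<ge> 2 * N" for n
    using N[of "n div 2"] that by (cases "even n") (auto elim: evenE oddE)
  then show "eventually (\<lambda>n. X n \<in> S) sequentially"
    unfolding eventually_sequentially by blast
qed

lemma prod_atLeast1_atMost_odd_pairs:
  fixes f :: "nat \<Rightarrow> 'a :: comm_monoid_mult"
  shows "(\<Prod>n=1..2*M+1. f n) = f 1 * (\<Prod>m<M. f (2 * Suc m) * f (2 * Suc m + 1))"
proof (induction M)
  case (Suc M)
  have "{1..2 * Suc M + 1} = insert (2 * Suc M + 1) (insert (2 * Suc M) {1..2*M+1})"
    by auto
  then show ?case
    using Suc by (simp add: ac_simps)
qed simp

definition tm_factor :: "nat \<Rightarrow> 'a :: field \<Rightarrow> 'a" where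
  "tm_factor n z = ((2 * of_nat n + z) / (2 * of_nat n + 1 + z)) powi thue_morse n"

definition tm_pair :: "nat \<Rightarrow> 'a :: field \<Rightarrow> 'a" where
  "tm_pair m z =
     ((4 * of_nat m + z) * (4 * of_nat m + 3 + z) / ((4 * of_nat m + 1 + z) * (4 * of_nat m + 2 + z)))
       powi thue_morse m"

lemma tm_factor_1: "tm_factor 1 z = (3 + z) / (2 + z)"
  unfolding tm_factor_def thue_morse_1 by (simp add: power_int_minus add_ac)

lemma tm_pair_of_real: "tm_pair m (complex_of_real x) = of_real (tm_pair m x)"
  by (simp add: tm_pair_def)

lemma tm_pair_eq:
  assumes "w = 4 * of_nat m + z"
  shows "tm_pair m z = (w * (w + 3) / ((w + 1) * (w + 2))) powi thue_morse m"
  by (simp add: tm_pair_def assms add_ac)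

lemma tm_factor_double_mult: "tm_factor (2 * m) z * tm_factor (2 * m + 1) z = tm_pair m z"
proof -
  define w where "w = 4 * of_nat m + z"
  have even: "tm_factor (2 * m) z = (w / (w + 1)) powi thue_morse m"
    by (simp add: tm_factor_def w_def add_ac)
  have odd: "tm_factor (2 * m + 1) z = ((w + 2) / (w + 3)) powi (- thue_morse m)"
    by (simp add: tm_factor_def w_def add_ac)
  have pair: "tm_pair m z = (w * (w + 3) / ((w + 1) * (w + 2))) powi thue_morse m"
    by (rule tm_pair_eq) (simp add: w_def)
  show ?thesis
    unfolding even odd pair using thue_morse_cases[of m]
    by (auto simp: power_int_minus)
qed

lemma norm_shifted_ge:
  fixes z :: complex
  assumes "Re z > -2" and "m \<ge> 1"
  shows "2 * real m \<le> norm (4 * of_nat m + of_nat k + z)"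
proof -
  have "2 * real m \<le> Re (4 * of_nat m + of_nat k + z)"
    using assms by simp
  also have "\<dots> \<le> norm (4 * of_nat m + of_nat k + z)"
    by (rule complex_Re_le_cmod)
  finally show ?thesis .
qed

lemma norm_tm_pair_minus_1_le:
  fixes z :: complex
  assumes z: "Re z > -2" and m: "m \<ge> 1"
  shows "norm (tm_pair m z - 1) \<le> 1 / real m ^ 2"
proof -
  define w where "w = 4 * of_nat m + z"
  have large: "2 * real m \<le> norm (w + of_nat k)" for k
    using norm_shifted_ge[OF z m, of k] by (simp add: w_def add_ac)
  have nz: "w + of_nat k \<noteq> 0" for k
    using large[of k] m by auto
  have bound: "norm (2 / (p * q)) \<le> 1 / real m ^ 2"
    if "2 * real m \<le> norm p" "2 * real m \<le> norm q" for p q :: complex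
  proof -
    have "norm (2 / (p * q)) = 2 / (norm p * norm q)"
      by (simp add: norm_divide norm_mult)
    also have "\<dots> \<le> 2 / ((2 * real m) * (2 * real m))"
      using that m by (intro divide_left_mono mult_mono mult_pos_pos) auto
    also have "\<dots> \<le> 1 / real m ^ 2"
      using m by (simp add: power2_eq_square divide_simps)
    finally show ?thesis .
  qed
  have pair: "tm_pair m z = (w * (w + 3) / ((w + 1) * (w + 2))) powi thue_morse m"
    by (rule tm_pair_eq) (simp add: w_def)
  consider "thue_morse m = 1" | "thue_morse m = -1"
    using thue_morse_cases by blast
  then show ?thesis
  proof cases
    case 1
    have "(w + 1) * (w + 2) \<noteq> 0"
      using nz[of 1] nz[of 2] by simp
    with 1 have "tm_pair m z - 1 = - (2 / ((w + 1) * (w + 2)))"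
      by (simp add: pair field_simps)
    with large[of 1] large[of 2] show ?thesis
      using bound by simp
  next
    case 2
    have "w * (w + 3) \<noteq> 0"
      using nz[of 0] nz[of 3] by simp
    with 2 have "tm_pair m z - 1 = 2 / (w * (w + 3))"
      by (simp add: pair power_int_minus field_simps)
    with large[of 0] large[of 3] show ?thesis
      using bound by simp
  qed
qed

lemma tm_pair_holomorphic:
  assumes "m \<ge> 1"
  shows "tm_pair m holomorphic_on {z. Re z > -2}"
proof -
  have nz: "4 * of_nat m + of_nat k + z \<noteq> 0" if "Re z > -2" for z :: complex and k
    using norm_shifted_ge[OF that assms, of k] assms by auto
  show ?thesis
    unfolding tm_pair_def
    using nz[of _ 0] nz[of _ 1] nz[of _ 2] nz[of _ 3]
    by (intro holomorphic_intros) auto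
qed

lemma holomorphic_on_lim_prod:
  fixes f :: "nat \<Rightarrow> complex \<Rightarrow> complex"
  assumes S: "open S" and hol: "\<And>n. f n holomorphic_on S"
    and bound: "\<And>n z. z \<in> S \<Longrightarrow> norm (f n z - 1) \<le> c n" and c: "summable c"
  defines "g \<equiv> \<lambda>z. lim (\<lambda>N. \<Prod>n<N. f n z)"
  shows "g holomorphic_on S" and "\<And>z. z \<in> S \<Longrightarrow> (\<lambda>N. \<Prod>n<N. f n z) \<longlonglongrightarrow> g z"
proof -
  have unif: "uniform_limit K (\<lambda>N z. \<Prod>n<N. f n z) g sequentially"
    if "compact K" "K \<subseteq> S" for K
  proof -
    have "uniformly_convergent_on K (\<lambda>N z. \<Prod>n<N. f n z)"
    proof (rule uniformly_convergent_on_prod')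
      show "continuous_on K (f n)" for n
        using holomorphic_on_imp_continuous_on[OF hol] continuous_on_subset that(2) by blast
      show "uniformly_convergent_on K (\<lambda>N z. \<Sum>n<N. norm (f n z - 1))"
        using bound that(2) by (intro Weierstrass_m_test'[OF _ c]) auto
    qed fact
    then show ?thesis
      unfolding g_def uniformly_convergent_uniform_limit_iff .
  qed
  show "(\<lambda>N. \<Prod>n<N. f n z) \<longlonglongrightarrow> g z" if "z \<in> S" for z
    using tendsto_uniform_limitI[OF unif[of "{z}"]] that by simp
  show "g holomorphic_on S"
  proof (rule holomorphic_uniform_sequence[OF S])
    show "(\<lambda>z. \<Prod>n<N. f n z) holomorphic_on S" for N
      using hol by (intro holomorphic_intros)
    fix z assume "z \<in> S"
    with S obtain e where "e > 0" "cball z e \<subseteq> S"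
      using open_contains_cball by blast
    then show "\<exists>d>0. cball z d \<subseteq> S \<and> uniform_limit (cball z d) (\<lambda>N z. \<Prod>n<N. f n z) g sequentially"
      using unif[of "cball z e"] by auto
  qed
qed

definition tm_pair_prod :: "complex \<Rightarrow> complex" where
  "tm_pair_prod z = lim (\<lambda>M. \<Prod>m<M. tm_pair (Suc m) z)"

lemma summable_inverse_Suc_squared: "summable (\<lambda>n. 1 / real (Suc n) ^ 2)"
proof (subst summable_Suc_iff)
  show "summable (\<lambda>n. 1 / real n ^ 2)"
    using inverse_power_summable[of 2, where 'a = real] by (simp add: inverse_eq_divide)
qed

lemma
  shows tm_pair_prod_holomorphic: "tm_pair_prod holomorphic_on {z. Re z > -2}"
    and tm_pair_prod_LIMSEQ: "Re z > -2 \<Longrightarrow> (\<lambda>M. \<Prod>m<M. tm_pair (Suc m) z) \<longlonglongrightarrow> tm_pair_prod z"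
  using holomorphic_on_lim_prod[OF open_halfspace_Re_gt tm_pair_holomorphic
      norm_tm_pair_minus_1_le summable_inverse_Suc_squared]
  unfolding tm_pair_prod_def[abs_def] by auto

lemma tm_factor_LIMSEQ_1: "(\<lambda>n. tm_factor n x) \<longlonglongrightarrow> (1 :: real)"
proof -
  define q where "q n = (2 * real n + x) / (2 * real n + 1 + x)" for n
  have q: "q \<longlonglongrightarrow> 1" and q_inverse: "(\<lambda>n. inverse (q n)) \<longlonglongrightarrow> 1"
    unfolding q_def by real_asymp+
  have "(\<lambda>n. if thue_morse n = 1 then q n else inverse (q n)) \<longlonglongrightarrow> 1"
    using tendsto_mono[OF inf_le1 q] tendsto_mono[OF inf_le1 q_inverse] by (rule filterlim_If)
  then show ?thesis
    unfolding tm_factor_def power_int_thue_morse q_def .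
qed

lemma h_tm_eq:
  assumes "x > -2"
  shows "h_tm x = (3 + x) / (2 + x) * Re (tm_pair_prod (of_real x))"
    (is "_ = ?L")
proof -
  define P where "P N = (\<Prod>n=1..N. tm_factor n x)" for N
  have "(\<lambda>M. \<Prod>m<M. tm_pair (Suc m) (complex_of_real x)) \<longlonglongrightarrow> tm_pair_prod (of_real x)"
    using assms by (intro tm_pair_prod_LIMSEQ) simp
  then have "(\<lambda>M. \<Prod>m<M. tm_pair (Suc m) x) \<longlonglongrightarrow> Re (tm_pair_prod (of_real x))"
    by (auto dest: tendsto_Re simp: tm_pair_of_real simp flip: of_real_prod)
  moreover have "P (2 * M + 1) = (3 + x) / (2 + x) * (\<Prod>m<M. tm_pair (Suc m) x)" for M
    unfolding P_def prod_atLeast1_atMost_odd_pairs tm_factor_1 tm_factor_double_mult ..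
  ultimately have odd: "(\<lambda>M. P (2 * M + 1)) \<longlonglongrightarrow> ?L"
    by (simp only:) (rule tendsto_mult_left)
  have "(\<lambda>M. tm_factor (2 * M + 2) x) \<longlonglongrightarrow> 1"
    using LIMSEQ_subseq_LIMSEQ[OF tm_factor_LIMSEQ_1, of "\<lambda>M. 2 * M + 2" x]
    by (simp add: strict_mono_def comp_def)
  with odd have "(\<lambda>M. P (2 * M + 1) * tm_factor (2 * M + 2) x) \<longlonglongrightarrow> ?L * 1"
    by (rule tendsto_mult)
  moreover have "P (2 * M + 1) * tm_factor (2 * M + 2) x = P (2 * Suc M)" for M
    by (simp add: P_def)
  ultimately have "(\<lambda>M. P (2 * Suc M)) \<longlonglongrightarrow> ?L"
    by simp
  then have "(\<lambda>M. P (2 * M)) \<longlonglongrightarrow> ?L"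
    by (rule LIMSEQ_imp_Suc)
  then have "P \<longlonglongrightarrow> ?L"
    using odd by (rule LIMSEQ_even_odd)
  then show ?thesis
    unfolding h_tm_def P_def[abs_def] tm_factor_def by (rule limI)
qed

lemma smooth_on_real_Re_holomorphic:
  assumes F: "F holomorphic_on S" "open S" and A: "open A" "of_real ` A \<subseteq> S"
    and f: "\<And>x. x \<in> A \<Longrightarrow> f x = Re (F (of_real x))"
  shows "smooth_on_real A f"
proof -
  define D where "D k x = (if k = 0 then f x else Re ((deriv ^^ k) F (of_real x)))" for k x
  have "(D k has_real_derivative D (Suc k) x) (at x)" if x: "x \<in> A" for k x
  proof -
    have "(deriv ^^ k) F holomorphic_on S"
      using F by (rule holomorphic_higher_deriv)
    then have "((deriv ^^ k) F has_field_derivative (deriv ^^ Suc k) F (of_real x)) (at (of_real x))"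
      using x A F(2) by (auto intro: holomorphic_derivI)
    then have "((\<lambda>t. Re ((deriv ^^ k) F (of_real t))) has_real_derivative D (Suc k) x) (at x)"
      unfolding D_def by (auto intro: has_field_derivative_Re has_vector_derivative_real_field)
    then show ?thesis
      using x A f
      by (cases "k = 0")
         (auto simp: D_def intro: has_field_derivative_transform_within_open[where S = A])
  qed
  moreover have "D 0 = f"
    by (simp add: D_def fun_eq_iff)
  ultimately show ?thesis
    unfolding smooth_on_real_def by blast
qed

theorem theorem4:
  shows "smooth_on_real {-2<..} h_tm"
proof (rule smooth_on_real_Re_holomorphic)
  have "2 + z \<noteq> 0" if "Re z > -2" for z :: complex
    using that by (auto simp: complex_eq_iff)
  then show "(\<lambda>z. (3 + z) / (2 + z) * tm_pair_prod z) holomorphic_on {z. Re z > -2}"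
    by (auto intro!: holomorphic_intros tm_pair_prod_holomorphic)
  show "h_tm x = Re ((3 + of_real x) / (2 + of_real x) * tm_pair_prod (of_real x))" if "x \<in> {-2<..}" for x
  proof -
    have "(3 + of_real x) / (2 + of_real x) = (of_real ((3 + x) / (2 + x)) :: complex)"
      by simp
    then show ?thesis
      using h_tm_eq[of x] that by simp
  qed
qed (auto simp: open_halfspace_Re_gt)

end
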